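(* For every $k\in\mathbb Z_+$ and $y\in T$, the map $E$ defines a bounded map from $S^2_{k,y}(U)$ to $S^2_{k,y}(\tilde U)$, with norm bounded uniformly in $y\in T$.
   Context: $U\subset\mathbb R^p$, $U'\subset\mathbb R^k$, $T\subset\mathbb R^q$ are open neighborhoods of the origin, $\tilde U=U\times U'\subset\mathbb R^N$, $N=p+k$. $X_1,\dots,X_d$ are smooth vector fields on $U\times T$ of the form $\sum_lX_i^l(x,y)\partial_{x_l}$, viewed as smooth families $\{X_{i,y}\}$ on $U$, and $\tilde X_i(x,x',y)=X_i(x,y)+\sum_{j=1}^ku_{ij}(x,x',y)\partial_{x'_j}$ are smooth vector fields on $\tilde U\times T$ (families $\{\tilde X_{i,y}\}$ on $\tilde U$) that at each point are free of order $m$ (their basic commutators $\operatorname{ad}\tilde X_{i_1}\cdots\operatorname{ad}\tilde X_{i_{r-1}}\tilde X_{i_r}$ of order $\le m$ span a space of dimension $\dim\mathfrak g_{d,m}=N$, $\mathfrak g_{d,m}$ the free nilpotent Lie algebra of step $m$ on $d$ generators) and span $\mathbb R^N$. Fix a basis of $\mathbb R^N$ at each point consisting of such commutators $\tilde X_{jk,y}$ (chosen via fixed index tuples, $\tilde X_{j1,y}=\tilde X_{j,y}$), and let $dv_y$ be the volume form of the Riemannian metric on $\tilde U$ making it orthonormal. For a tuple $I=(i_1,\dots,i_r)$ put $X_{I,y}=X_{i_1,y}\cdots X_{i_r,y}$, $\tilde X_{I,y}=\tilde X_{i_1,y}\cdots\tilde X_{i_r,y}$. $S^2_{k,y}(U)=\{f\in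 L^2(U):X_{I,y}f\in L^2(U),|I|\le k\}$ with norm $\sum_{|I|\le k}\|X_{I,y}f\|_{L^2}$ (Lebesgue measure), and $S^2_{k,y}(\tilde U)$ analogously with $\tilde X_{I,y}$ and $L^2(\tilde U,dv_y)$. $E:C^\infty(\overline U)\to C^\infty(\overline{\tilde U})$ is $Ef(x,x')=f(x)$. *)

theory Defs
  imports "HOL-Analysis.Analysis" "HOL-Computational_Algebra.Squarefree"
begin

fun pderivs :: "('a::euclidean_space \<Rightarrow> 'b::real_normed_vector) \<Rightarrow> 'a list \<Rightarrow> 'a \<Rightarrow> 'b" where
  "pderivs f [] = f"
| "pderivs f (b # bs) = (\<lambda>z. frechet_derivative (pderivs f bs) (at z) b)"

definition smooth_on :: "'a::euclidean_space set \<Rightarrow> ('a \<Rightarrow> 'b::real_normed_vector) \<Rightarrow> bool" where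
  "smooth_on S f \<longleftrightarrow> open S \<and>
     (\<forall>bs. set bs \<subseteq> Basis \<longrightarrow> (\<forall>z\<in>S. pderivs f bs differentiable (at z)))"

definition vf_apply :: "('a::euclidean_space \<Rightarrow> 'a) \<Rightarrow> ('a \<Rightarrow> real) \<Rightarrow> 'a \<Rightarrow> real" where
  "vf_apply V g = (\<lambda>z. frechet_derivative g (at z) (V z))"

fun vf_word :: "(nat \<Rightarrow> 'a::euclidean_space \<Rightarrow> 'a) \<Rightarrow> nat list \<Rightarrow> ('a \<Rightarrow> real) \<Rightarrow> 'a \<Rightarrow> real" where
  "vf_word Xs [] g = g"
| "vf_word Xs (i # I) g = vf_apply (Xs i) (vf_word Xs I g)"

definition lie_bracket :: "('a::euclidean_space \<Rightarrow> 'a) \<Rightarrow> ('a \<Rightarrow> 'a) \<Rightarrow> 'a \<Rightarrow> 'a" where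
  "lie_bracket V W = (\<lambda>z. frechet_derivative W (at z) (V z) - frechet_derivative V (at z) (W z))"

fun commutator :: "(nat \<Rightarrow> 'a::euclidean_space \<Rightarrow> 'a) \<Rightarrow> nat list \<Rightarrow> 'a \<Rightarrow> 'a" where
  "commutator Xs [] = (\<lambda>z. 0)"
| "commutator Xs [i] = Xs i"
| "commutator Xs (i # j # J) = lie_bracket (Xs i) (commutator Xs (j # J))"

definition tuples_upto :: "nat \<Rightarrow> nat \<Rightarrow> nat list set" where
  "tuples_upto d m = {J. J \<noteq> [] \<and> set J \<subseteq> {..<d} \<and> length J \<le> m}"

definition words_upto :: "nat \<Rightarrow> nat \<Rightarrow> nat list set" where
  "words_upto d k = {I. set I \<subseteq> {..<d} \<and> length I \<le> k}"

section \<open>Dimension of the free nilpotent Lie algebra g_{d,m} (Witt's formula)\<close>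

definition moebius :: "nat \<Rightarrow> int" where
  "moebius n = (if squarefree n then (-1) ^ card (prime_factors n) else 0)"

definition free_nilpotent_dim :: "nat \<Rightarrow> nat \<Rightarrow> int" where
  "free_nilpotent_dim d m =
     (\<Sum>r\<in>{1..m}. (\<Sum>s\<in>{s. s dvd r}. moebius s * int d ^ (r div s)) div int r)"

text \<open>Membership in S^2_k for a weight rho (density of the measure w.r.t. Lebesgue).\<close>
definition S2_mem :: "(nat \<Rightarrow> 'a::euclidean_space \<Rightarrow> 'a) \<Rightarrow> nat \<Rightarrow> nat \<Rightarrow> 'a set
                       \<Rightarrow> ('a \<Rightarrow> real) \<Rightarrow> ('a \<Rightarrow> real) \<Rightarrow> bool" where
  "S2_mem Xs d k S rho g \<longleftrightarrow>
     (\<forall>I\<in>words_upto d k. set_integrable lborel S (\<lambda>z. (vf_word Xs I g z)\<^sup>2 * rho z))"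

definition S2_norm :: "(nat \<Rightarrow> 'a::euclidean_space \<Rightarrow> 'a) \<Rightarrow> nat \<Rightarrow> nat \<Rightarrow> 'a set
                       \<Rightarrow> ('a \<Rightarrow> real) \<Rightarrow> ('a \<Rightarrow> real) \<Rightarrow> real" where
  "S2_norm Xs d k S rho g =
     (\<Sum>I\<in>words_upto d k. sqrt (LINT z:S|lborel. (vf_word Xs I g z)\<^sup>2 * rho z))"

definition proj_x :: "real^('p::finite + 'k::finite) \<Rightarrow> real^'p" where
  "proj_x z = (\<chi> l. z $ Inl l)"

definition proj_x' :: "real^('p::finite + 'k::finite) \<Rightarrow> real^'k" where
  "proj_x' z = (\<chi> j. z $ Inr j)"

text \<open>Lifted vector field  tilde X_i = X_i(x,y) + sum_j u_ij(x,x',y) d/dx'_j.\<close>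
definition lift_field :: "(real^'p \<Rightarrow> real^'q \<Rightarrow> real^'p) \<Rightarrow> (real^('p::finite + 'k::finite) \<Rightarrow> real^'q::finite \<Rightarrow> real^'k)
      \<Rightarrow> real^'q \<Rightarrow> real^('p + 'k) \<Rightarrow> real^('p + 'k)" where
  "lift_field X u y z = (\<chi> r. case r of Inl l \<Rightarrow> X (proj_x z) y $ l | Inr j \<Rightarrow> u z y $ j)"

definition ext_op :: "(real^'p \<Rightarrow> real) \<Rightarrow> real^('p::finite + 'k::finite) \<Rightarrow> real" where
  "ext_op f z = f (proj_x z)"

text \<open>Matrix whose columns are the chosen basis commutators at z; the density of dv_y
  (volume of the metric making these columns orthonormal) is 1/|det|.\<close>
definition frame_matrix :: "(nat \<Rightarrow> real^'n::finite \<Rightarrow> real^'n) \<Rightarrow> ('n \<Rightarrow> nat list) \<Rightarrow> real^'n \<Rightarrow> real^'n^'n" where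
  "frame_matrix Xs Js z = (\<chi> r c. commutator Xs (Js c) z $ r)"

definition frame_density :: "(nat \<Rightarrow> real^'n::finite \<Rightarrow> real^'n) \<Rightarrow> ('n \<Rightarrow> nat list) \<Rightarrow> real^'n \<Rightarrow> real" where
  "frame_density Xs Js z = 1 / \<bar>det (frame_matrix Xs Js z)\<bar>"

end

theory Submission
  imports Defs
begin

text \<open>The lifted fields project onto the \<open>X\<^sub>i\<close>, so every word satisfies
  \<open>X\<^sub>I (E f) = (X\<^sub>I f) \<circ> proj_x\<close> on the cylinder \<open>U \<times> U'\<close>. The density of \<open>dv\<^sub>y\<close> is
  \<open>1 / |det|\<close> of the frame of commutators; the frame depends smoothly on \<open>(z, y)\<close> and is
  invertible on the compact set \<open>closure (U \<times> U') \<times> closure T\<close>, so the density is bounded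
  there by some \<open>M\<close>. Fubini over the cylinder then bounds the weighted \<open>L\<^sup>2\<close> norm of
  \<open>X\<^sub>I (E f)\<close> by \<open>sqrt (M |U'|)\<close> times the \<open>L\<^sup>2\<close> norm of \<open>X\<^sub>I f\<close>, uniformly in \<open>y\<close>.\<close>

section \<open>Smooth functions\<close>

lemma differentiable_transform_within_open:
  assumes "g differentiable (at z)" "open S" "z \<in> S" "\<And>x. x \<in> S \<Longrightarrow> g x = f x"
  shows "f differentiable (at z)"
  using assms has_derivative_transform_within_open unfolding differentiable_def by blast

lemma pderivs_append: "pderivs f (bs @ [b]) = pderivs (\<lambda>z. frechet_derivative f (at z) b) bs"
  by (induction bs) auto

lemma smooth_on_iff:
  "smooth_on S f \<longleftrightarrow> open S \<and> (\<forall>z\<in>S. f differentiable (at z)) \<and>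
     (\<forall>b\<in>Basis. smooth_on S (\<lambda>z. frechet_derivative f (at z) b))"
proof -
  have "(\<forall>bs. set bs \<subseteq> Basis \<longrightarrow> (\<forall>z\<in>S. pderivs f bs differentiable (at z))) \<longleftrightarrow>
        (\<forall>z\<in>S. f differentiable (at z)) \<and>
        (\<forall>b\<in>Basis. \<forall>bs. set bs \<subseteq> Basis \<longrightarrow>
           (\<forall>z\<in>S. pderivs (\<lambda>z. frechet_derivative f (at z) b) bs differentiable (at z)))"
    (is "?all \<longleftrightarrow> ?split")
  proof
    assume all: ?all
    show ?split
    proof (intro conjI ballI allI impI)
      fix z assume "z \<in> S"
      then show "f differentiable (at z)" using all[rule_format, of "[]"] by simp
    next
      fix b :: 'a and bs :: "'a list" and z assume "b \<in> Basis" "set bs \<subseteq> Basis" "z \<in> S"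
      then show "pderivs (\<lambda>z. frechet_derivative f (at z) b) bs differentiable (at z)"
        using all[rule_format, of "bs @ [b]"] by (simp add: pderivs_append)
    qed
  next
    assume split: ?split
    show ?all
    proof (intro allI impI)
      fix bs :: "'a list" assume "set bs \<subseteq> Basis"
      then show "\<forall>z\<in>S. pderivs f bs differentiable (at z)"
        using split by (induction bs rule: rev_induct) (auto simp: pderivs_append)
    qed
  qed
  then show ?thesis unfolding smooth_on_def by blast
qed

lemma smooth_onD:
  assumes "smooth_on S f"
  shows smooth_on_open: "open S"
    and smooth_on_differentiable: "z \<in> S \<Longrightarrow> f differentiable (at z)"
    and smooth_on_partial: "b \<in> Basis \<Longrightarrow> smooth_on S (\<lambda>z. frechet_derivative f (at z) b)"
  using assms unfolding smooth_on_iff[of S f] by blast+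

lemma smooth_on_coinduct:
  assumes S: "open S" and "P h" and eq: "\<And>z. z \<in> S \<Longrightarrow> f z = h z"
    and step: "\<And>g. P g \<Longrightarrow> (\<forall>z\<in>S. g differentiable (at z)) \<and>
        (\<forall>b\<in>Basis. \<exists>h. P h \<and> (\<forall>z\<in>S. frechet_derivative g (at z) b = h z))"
  shows "smooth_on S f"
proof -
  have "\<exists>h. P h \<and> (\<forall>z\<in>S. pderivs f bs z = h z)" if "set bs \<subseteq> Basis" for bs
    using that
  proof (induction bs)
    case Nil
    then show ?case using \<open>P h\<close> eq by auto
  next
    case (Cons b bs)
    then obtain g where g: "P g" "\<forall>z\<in>S. pderivs f bs z = g z" by auto
    moreover have "b \<in> Basis" using Cons.prems by simp
    ultimately obtain h where h: "P h" "\<forall>z\<in>S. frechet_derivative g (at z) b = h z"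
      using step by blast
    have "pderivs f (b # bs) z = h z" if "z \<in> S" for z
      using frechet_derivative_transform_within_open[OF _ S that, of g "pderivs f bs"] step[OF g(1)]
        g(2) h(2) that by auto
    then show ?case using h(1) by blast
  qed
  note pd = this
  show ?thesis
    unfolding smooth_on_def
  proof (intro conjI S allI impI ballI)
    fix bs :: "'a list" and z assume "set bs \<subseteq> Basis" "z \<in> S"
    with pd obtain g where "P g" "\<forall>z\<in>S. pderivs f bs z = g z" by blast
    with step \<open>z \<in> S\<close> show "pderivs f bs differentiable (at z)"
      using differentiable_transform_within_open[OF _ S \<open>z \<in> S\<close>, of g] by metis
  qed
qed

lemma smooth_on_cong:
  assumes "smooth_on S h" "\<And>z. z \<in> S \<Longrightarrow> f z = h z"
  shows "smooth_on S f"
  by (rule smooth_on_coinduct[where P="smooth_on S", OF smooth_on_open[OF assms(1)] assms])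
     (auto dest: smooth_onD)

lemma smooth_on_subset: "smooth_on S f \<Longrightarrow> open T \<Longrightarrow> T \<subseteq> S \<Longrightarrow> smooth_on T f"
  unfolding smooth_on_def by blast

lemma smooth_on_const: "open S \<Longrightarrow> smooth_on S (\<lambda>_. c)"
  by (rule smooth_on_coinduct[where P="\<lambda>g. \<exists>c. g = (\<lambda>_. c)"])
     (auto simp: frechet_derivative_const)

lemma smooth_on_imp_continuous_on: "smooth_on S f \<Longrightarrow> continuous_on S f"
  by (metis continuous_at_imp_continuous_on differentiable_imp_continuous_within smooth_on_differentiable)

lemma frechet_derivative_Basis_expansion:
  assumes "g differentiable (at z)"
  shows "frechet_derivative g (at z) v = (\<Sum>b\<in>Basis. (v \<bullet> b) *\<^sub>R frechet_derivative g (at z) b)"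
proof -
  interpret linear "frechet_derivative g (at z)"
    by (rule linear_frechet_derivative[OF assms])
  show ?thesis
    by (subst euclidean_representation[symmetric, of v]) (simp add: sum scale)
qed

text \<open>Finite sums of products of smooth functions are closed under partial derivatives (Leibniz
  rule), which makes them an invariant for the coinduction principle above.\<close>
definition sum_prods :: "(('a \<Rightarrow> real) \<times> ('a \<Rightarrow> real)) list \<Rightarrow> 'a \<Rightarrow> real" where
  "sum_prods ps = (\<lambda>z. \<Sum>(f, g)\<leftarrow>ps. f z * g z)"

definition partial_prods ::
    "'a::euclidean_space \<Rightarrow> (('a \<Rightarrow> real) \<times> ('a \<Rightarrow> real)) list \<Rightarrow> (('a \<Rightarrow> real) \<times> ('a \<Rightarrow> real)) list" where
  "partial_prods b ps = concat (map (\<lambda>(f, g).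
     [(\<lambda>z. frechet_derivative f (at z) b, g), (f, \<lambda>z. frechet_derivative g (at z) b)]) ps)"

lemma has_derivative_sum_prods:
  assumes "\<forall>(f, g)\<in>set ps. f differentiable (at z) \<and> g differentiable (at z)"
  shows "(sum_prods ps has_derivative (\<lambda>v. \<Sum>(f, g)\<leftarrow>ps.
           frechet_derivative f (at z) v * g z + f z * frechet_derivative g (at z) v)) (at z)"
  using assms
proof (induction ps)
  case Nil
  then show ?case by (simp add: sum_prods_def)
next
  case (Cons p ps)
  obtain f g where p: "p = (f, g)" by fastforce
  have "((\<lambda>z. f z * g z) has_derivative
          (\<lambda>v. f z * frechet_derivative g (at z) v + frechet_derivative f (at z) v * g z)) (at z)"
    using Cons.prems frechet_derivative_works by (intro has_derivative_mult) (auto simp: p)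
  from has_derivative_add[OF this Cons.IH] Cons.prems show ?case
    by (simp add: sum_prods_def p algebra_simps)
qed

lemma sum_prods_partial_prods:
  "(\<Sum>(f, g)\<leftarrow>ps. frechet_derivative f (at z) b * g z + f z * frechet_derivative g (at z) b)
     = sum_prods (partial_prods b ps) z"
  by (induction ps) (auto simp: sum_prods_def partial_prods_def)

lemma smooth_on_sum_prods:
  assumes "open S" "\<forall>(f, g)\<in>set ps. smooth_on S f \<and> smooth_on S g"
  shows "smooth_on S (sum_prods ps)"
proof (rule smooth_on_coinduct[where
      P="\<lambda>h. \<exists>ps. h = sum_prods ps \<and> (\<forall>(f, g)\<in>set ps. smooth_on S f \<and> smooth_on S g)"])
  fix h assume "\<exists>ps. h = sum_prods ps \<and> (\<forall>(f, g)\<in>set ps. smooth_on S f \<and> smooth_on S g)"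
  then obtain ps where h: "h = sum_prods ps"
    and ps: "\<forall>(f, g)\<in>set ps. smooth_on S f \<and> smooth_on S g" by blast
  have der: "(h has_derivative (\<lambda>v. \<Sum>(f, g)\<leftarrow>ps.
           frechet_derivative f (at z) v * g z + f z * frechet_derivative g (at z) v)) (at z)"
    if "z \<in> S" for z
    unfolding h using ps that by (intro has_derivative_sum_prods) (auto dest: smooth_on_differentiable)
  have "frechet_derivative h (at z) b = sum_prods (partial_prods b ps) z" if "z \<in> S" for z b
    using frechet_derivative_at[OF der[OF that], symmetric] sum_prods_partial_prods by simp
  moreover have "\<forall>(f, g)\<in>set (partial_prods b ps). smooth_on S f \<and> smooth_on S g" if "b \<in> Basis" for b
    using ps that by (auto simp: partial_prods_def intro: smooth_on_partial)
  ultimately show "(\<forall>z\<in>S. h differentiable (at z)) \<and> (\<forall>b\<in>Basis. \<exists>h'. (\<exists>ps. h' = sum_prods ps \<and>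
      (\<forall>(f, g)\<in>set ps. smooth_on S f \<and> smooth_on S g)) \<and> (\<forall>z\<in>S. frechet_derivative h (at z) b = h' z))"
    using der unfolding differentiable_def by blast
qed (use assms in auto)

lemma smooth_on_mult:
  fixes f g :: "'a::euclidean_space \<Rightarrow> real"
  assumes "smooth_on S f" "smooth_on S g"
  shows "smooth_on S (\<lambda>z. f z * g z)"
  using smooth_on_sum_prods[of S "[(f, g)]"] assms smooth_on_open[OF assms(1)]
  by (simp add: sum_prods_def)

lemma smooth_on_add:
  fixes f g :: "'a::euclidean_space \<Rightarrow> real"
  assumes "smooth_on S f" "smooth_on S g"
  shows "smooth_on S (\<lambda>z. f z + g z)"
  using smooth_on_sum_prods[of S "[(f, \<lambda>_. 1), (g, \<lambda>_. 1)]"] assms smooth_on_open[OF assms(1)]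
  by (simp add: sum_prods_def smooth_on_const)

lemma smooth_on_diff:
  fixes f g :: "'a::euclidean_space \<Rightarrow> real"
  assumes "smooth_on S f" "smooth_on S g"
  shows "smooth_on S (\<lambda>z. f z - g z)"
  using smooth_on_sum_prods[of S "[(f, \<lambda>_. 1), (g, \<lambda>_. -1)]"] assms smooth_on_open[OF assms(1)]
  by (simp add: sum_prods_def smooth_on_const)

lemma smooth_on_sum:
  fixes F :: "'i \<Rightarrow> 'a::euclidean_space \<Rightarrow> real"
  assumes "open S" "\<And>i. i \<in> A \<Longrightarrow> smooth_on S (F i)"
  shows "smooth_on S (\<lambda>z. \<Sum>i\<in>A. F i z)"
  using assms by (induction A rule: infinite_finite_induct) (auto intro: smooth_on_const smooth_on_add)

lemma smooth_on_bounded_linear: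
  fixes F :: "'a::euclidean_space \<Rightarrow> 'b::real_normed_vector"
  assumes L: "bounded_linear L" and F: "smooth_on S F"
  shows "smooth_on S (\<lambda>z. L (F z))"
proof (rule smooth_on_coinduct[where P="\<lambda>h. \<exists>G. smooth_on S G \<and> h = (\<lambda>z. L (G z))"])
  fix h assume "\<exists>G. smooth_on S G \<and> h = (\<lambda>z. L (G z))"
  then obtain G where G: "smooth_on S G" and h: "h = (\<lambda>z. L (G z))" by blast
  have der: "(h has_derivative (\<lambda>v. L (frechet_derivative G (at z) v))) (at z)" if "z \<in> S" for z
    unfolding h using smooth_on_differentiable[OF G that]
    by (intro bounded_linear.has_derivative[OF L]) (simp add: frechet_derivative_works)
  have "frechet_derivative h (at z) b = L (frechet_derivative G (at z) b)" if "z \<in> S" for z b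
    using frechet_derivative_at[OF der[OF that], symmetric] by simp
  then show "(\<forall>z\<in>S. h differentiable (at z)) \<and> (\<forall>b\<in>Basis. \<exists>h'. (\<exists>G. smooth_on S G \<and>
      h' = (\<lambda>z. L (G z))) \<and> (\<forall>z\<in>S. frechet_derivative h (at z) b = h' z))"
    using smooth_on_partial[OF G] der unfolding differentiable_def by blast
qed (use F smooth_on_open in auto)

lemma smooth_on_compose_affine:
  fixes G :: "'c::euclidean_space \<Rightarrow> real" and L :: "'a::euclidean_space \<Rightarrow> 'c"
  assumes L: "bounded_linear L" and G: "smooth_on S G"
  shows "smooth_on {x. L x + c \<in> S} (\<lambda>x. G (L x + c))"
proof (rule smooth_on_coinduct[where P="\<lambda>h. \<exists>H. smooth_on S H \<and> h = (\<lambda>x. H (L x + c))"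
      and h="\<lambda>x. G (L x + c)"])
  show "open {x. L x + c \<in> S}"
    using open_vimage[OF smooth_on_open[OF G], of "\<lambda>x. L x + c"]
    by (simp add: vimage_def continuous_intros linear_continuous_on L)
  fix h :: "'a \<Rightarrow> real" assume "\<exists>H. smooth_on S H \<and> h = (\<lambda>x. H (L x + c))"
  then obtain H :: "'c \<Rightarrow> real" where H: "smooth_on S H" and h: "h = (\<lambda>x. H (L x + c))"
    by blast
  have der: "(h has_derivative (\<lambda>v. frechet_derivative H (at (L x + c)) (L v))) (at x)"
    if "L x + c \<in> S" for x
  proof -
    have "((\<lambda>x. L x + c) has_derivative L) (at x)"
      using bounded_linear.has_derivative[OF L has_derivative_ident] by (rule has_derivative_add_const)
    from diff_chain_at[OF this frechet_derivative_works[THEN iffD1, OF smooth_on_differentiable[OF H that]]]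
    show ?thesis by (simp add: h o_def)
  qed
  show "(\<forall>x\<in>{x. L x + c \<in> S}. h differentiable (at x)) \<and> (\<forall>b\<in>Basis. \<exists>h'. (\<exists>H. smooth_on S H \<and>
      h' = (\<lambda>x. H (L x + c))) \<and> (\<forall>x\<in>{x. L x + c \<in> S}. frechet_derivative h (at x) b = h' x))"
  proof (intro conjI ballI)
    fix x assume "x \<in> {x. L x + c \<in> S}"
    then show "h differentiable (at x)" using der unfolding differentiable_def by blast
  next
    fix b :: 'a assume "b \<in> Basis"
    let ?H' = "\<lambda>y. \<Sum>e\<in>(Basis :: 'c set). (L b \<bullet> e) * frechet_derivative H (at y) e"
    have "smooth_on S ?H'"
      by (intro smooth_on_sum smooth_on_mult smooth_on_const smooth_on_partial[OF H] smooth_on_open[OF H])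
    moreover have "\<forall>x\<in>{x. L x + c \<in> S}. frechet_derivative h (at x) b = ?H' (L x + c)"
    proof
      fix x assume x: "x \<in> {x. L x + c \<in> S}"
      have "frechet_derivative h (at x) b = frechet_derivative H (at (L x + c)) (L b)"
        using frechet_derivative_at[OF der, symmetric] x by simp
      also have "\<dots> = ?H' (L x + c)"
        using frechet_derivative_Basis_expansion[OF smooth_on_differentiable[OF H], of _ "L b"] x
        by simp
      finally show "frechet_derivative h (at x) b = ?H' (L x + c)" .
    qed
    ultimately show "\<exists>h'. (\<exists>H. smooth_on S H \<and> h' = (\<lambda>x. H (L x + c))) \<and>
        (\<forall>x\<in>{x. L x + c \<in> S}. frechet_derivative h (at x) b = h' x)"
      by blast
  qed
qed (use G in auto)

lemma smooth_on_slice: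
  fixes H :: "'a::euclidean_space \<times> 'c::euclidean_space \<Rightarrow> real"
  assumes "smooth_on W H"
  shows "smooth_on {x. (x, y) \<in> W} (\<lambda>x. H (x, y))"
  using smooth_on_compose_affine[OF bounded_linear_Pair[OF bounded_linear_ident bounded_linear_zero]
      assms, of "(0, y)"]
  by simp

section \<open>Vector fields depending on a parameter\<close>

lemma frechet_derivative_slice:
  fixes H :: "'a::euclidean_space \<times> 'c::euclidean_space \<Rightarrow> real"
  assumes "H differentiable (at (z, y))"
  shows "frechet_derivative (\<lambda>x. H (x, y)) (at z) v =
           (\<Sum>e\<in>Basis. (v \<bullet> e) * frechet_derivative H (at (z, y)) (e, 0))"
proof -
  interpret linear "frechet_derivative H (at (z, y))"
    by (rule linear_frechet_derivative[OF assms])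
  have der: "((\<lambda>x. H (x, y)) has_derivative (\<lambda>v. frechet_derivative H (at (z, y)) (v, 0))) (at z)"
    using diff_chain_at[OF has_derivative_Pair[OF has_derivative_ident has_derivative_const]
        frechet_derivative_works[THEN iffD1, OF assms]]
    by (simp add: o_def)
  have "frechet_derivative (\<lambda>x. H (x, y)) (at z) v = frechet_derivative H (at (z, y)) (v, 0)"
    using frechet_derivative_at[OF der, symmetric] by simp
  also have "(v, 0) = (\<Sum>e\<in>Basis. (v \<bullet> e) *\<^sub>R (e, 0 :: 'c))"
    by (simp add: prod_eq_iff fst_sum snd_sum euclidean_representation)
  finally show ?thesis
    by (simp add: sum scale del: scaleR_Pair)
qed

lemma frechet_derivative_inner_left:
  assumes "F differentiable (at z)"
  shows "frechet_derivative (\<lambda>x. F x \<bullet> c) (at z) v = frechet_derivative F (at z) v \<bullet> c"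
proof -
  have "((\<lambda>x. F x \<bullet> c) has_derivative (\<lambda>v. frechet_derivative F (at z) v \<bullet> c)) (at z)"
    using assms by (intro has_derivative_inner_left) (simp add: frechet_derivative_works)
  from frechet_derivative_at[OF this, symmetric] show ?thesis by simp
qed

lemma differentiable_param:
  fixes F :: "'c::euclidean_space \<Rightarrow> 'a::euclidean_space \<Rightarrow> 'b::euclidean_space"
  assumes F: "\<And>e. e \<in> Basis \<Longrightarrow> smooth_on W (\<lambda>w. F (snd w) (fst w) \<bullet> e)" and zt: "(z, t) \<in> W"
  shows "F t differentiable (at z)"
proof (rule differentiable_componentwise_within[THEN iffD2], rule ballI)
  fix e :: 'b assume "e \<in> Basis"
  have "z \<in> {x. (x, t) \<in> W}" using zt by simp
  from smooth_on_differentiable[OF smooth_on_slice[OF F[OF \<open>e \<in> Basis\<close>]] this]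
  show "(\<lambda>x. F t x \<bullet> e) differentiable (at z)"
    by simp
qed

lemma frechet_derivative_param:
  fixes F :: "'c::euclidean_space \<Rightarrow> 'a::euclidean_space \<Rightarrow> 'b::euclidean_space"
  assumes F: "\<And>e. e \<in> Basis \<Longrightarrow> smooth_on W (\<lambda>w. F (snd w) (fst w) \<bullet> e)" and zt: "(z, t) \<in> W"
    and b: "b \<in> Basis"
  shows "frechet_derivative (F t) (at z) v \<bullet> b =
           (\<Sum>e\<in>Basis. (v \<bullet> e) * frechet_derivative (\<lambda>w. F (snd w) (fst w) \<bullet> b) (at (z, t)) (e, 0))"
  using frechet_derivative_inner_left[OF differentiable_param[OF F zt], of b v]
    frechet_derivative_slice[OF smooth_on_differentiable[OF F[OF b] zt], of v]
  by simp

text \<open>Commutators differentiate in the first variable only; joint smoothness in the parameter is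
  what makes the frame determinant continuous in \<open>(z, y)\<close>.\<close>
lemma smooth_on_commutator_param:
  fixes Y :: "'c::euclidean_space \<Rightarrow> nat \<Rightarrow> 'a::euclidean_space \<Rightarrow> 'a"
  assumes W: "open W"
    and Y: "\<And>i b. i < d \<Longrightarrow> b \<in> Basis \<Longrightarrow> smooth_on W (\<lambda>w. Y (snd w) i (fst w) \<bullet> b)"
  shows "J \<noteq> [] \<Longrightarrow> set J \<subseteq> {..<d} \<Longrightarrow> b \<in> Basis \<Longrightarrow>
           smooth_on W (\<lambda>w. commutator (Y (snd w)) J (fst w) \<bullet> b)"
proof (induction J arbitrary: b rule: induct_list012)
  case (2 i)
  then show ?case using Y by simp
next
  case (3 i j J)
  let ?C = "\<lambda>t. commutator (Y t) (j # J)"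
  let ?D = "\<lambda>f e w. frechet_derivative f (at w) (e, 0)"
  have i: "i < d" using "3.prems" by simp
  have C: "smooth_on W (\<lambda>w. ?C (snd w) (fst w) \<bullet> e)" if "e \<in> Basis" for e
    using "3.IH"(2) "3.prems" that by simp
  have Yi: "smooth_on W (\<lambda>w. Y (snd w) i (fst w) \<bullet> e)" if "e \<in> Basis" for e
    using Y[OF i that] .
  let ?Br = "\<lambda>w. (\<Sum>e\<in>Basis. (Y (snd w) i (fst w) \<bullet> e) * ?D (\<lambda>w. ?C (snd w) (fst w) \<bullet> b) e w)
               - (\<Sum>e\<in>Basis. (?C (snd w) (fst w) \<bullet> e) * ?D (\<lambda>w. Y (snd w) i (fst w) \<bullet> b) e w)"
  have "smooth_on W ?Br"
    using "3.prems"(3) by (intro smooth_on_diff smooth_on_sum smooth_on_mult W Yi C smooth_on_partial)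
      (auto simp: Basis_prod_def)
  moreover have "commutator (Y (snd w)) (i # j # J) (fst w) \<bullet> b = ?Br w" if "w \<in> W" for w
  proof -
    obtain z t where w: "w = (z, t)" by fastforce
    show ?thesis
      using frechet_derivative_param[where F="?C", OF C, of z t b]
        frechet_derivative_param[where F="\<lambda>t. Y t i", OF Yi, of z t b] that "3.prems"(3)
      by (simp add: w lie_bracket_def inner_diff_left)
  qed
  ultimately show ?case by (rule smooth_on_cong)
qed simp

lemma continuous_on_frame_det:
  fixes Y :: "'c::euclidean_space \<Rightarrow> nat \<Rightarrow> real^'n::finite \<Rightarrow> real^'n"
  assumes W: "open W"
    and Y: "\<And>i b. i < d \<Longrightarrow> b \<in> Basis \<Longrightarrow> smooth_on W (\<lambda>w. Y (snd w) i (fst w) \<bullet> b)"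
    and Js: "\<And>c. Js c \<in> tuples_upto d m"
  shows "continuous_on W (\<lambda>w. det (frame_matrix (Y (snd w)) Js (fst w)))"
proof -
  have entry: "continuous_on W (\<lambda>w. frame_matrix (Y (snd w)) Js (fst w) $ r $ c)" for r c
  proof -
    have "smooth_on W (\<lambda>w. commutator (Y (snd w)) (Js c) (fst w) \<bullet> axis r 1)"
      using Js[of c] by (intro smooth_on_commutator_param[OF W Y]) (auto simp: tuples_upto_def Basis_vec_def)
    from smooth_on_imp_continuous_on[OF this] show ?thesis
      by (simp add: frame_matrix_def cart_eq_inner_axis[symmetric])
  qed
  show ?thesis
    unfolding det_def by (intro continuous_intros entry)
qed

lemma continuous_on_frame_density:
  fixes Y :: "'c::euclidean_space \<Rightarrow> nat \<Rightarrow> real^'n::finite \<Rightarrow> real^'n"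
  assumes W: "open W"
    and Y: "\<And>i b. i < d \<Longrightarrow> b \<in> Basis \<Longrightarrow> smooth_on W (\<lambda>w. Y (snd w) i (fst w) \<bullet> b)"
    and Js: "\<And>c. Js c \<in> tuples_upto d m"
    and S: "\<And>z. z \<in> S \<Longrightarrow> (z, y) \<in> W \<and> det (frame_matrix (Y y) Js z) \<noteq> 0"
  shows "continuous_on S (frame_density (Y y) Js)"
proof -
  have "continuous_on S (\<lambda>z. (z, y))" by (intro continuous_intros)
  moreover have "(\<lambda>z. (z, y)) ` S \<subseteq> W" using S by auto
  ultimately have "continuous_on S (\<lambda>z. det (frame_matrix (Y y) Js z))"
    by (rule continuous_on_compose2[OF continuous_on_frame_det[where Y=Y and Js=Js, OF W Y Js],
          where f="\<lambda>z. (z, y)", simplified])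
  then show ?thesis
    unfolding frame_density_def[abs_def] using S by (intro continuous_intros) auto
qed

lemma frame_density_bounded:
  fixes Y :: "'c::euclidean_space \<Rightarrow> nat \<Rightarrow> real^'n::finite \<Rightarrow> real^'n"
  assumes W: "open W"
    and Y: "\<And>i b. i < d \<Longrightarrow> b \<in> Basis \<Longrightarrow> smooth_on W (\<lambda>w. Y (snd w) i (fst w) \<bullet> b)"
    and Js: "\<And>c. Js c \<in> tuples_upto d m"
    and K: "compact K" "K \<subseteq> W" "\<And>z y. (z, y) \<in> K \<Longrightarrow> det (frame_matrix (Y y) Js z) \<noteq> 0"
  obtains M where "\<And>z y. (z, y) \<in> K \<Longrightarrow> frame_density (Y y) Js z \<le> M"
proof -
  let ?rho = "\<lambda>w. frame_density (Y (snd w)) Js (fst w)"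
  have "continuous_on K ?rho"
    using continuous_on_subset[OF continuous_on_frame_det[where Y=Y and Js=Js, OF W Y Js] K(2)] K(3)
    unfolding frame_density_def by (intro continuous_intros) auto
  then have "bounded (?rho ` K)"
    by (intro compact_imp_bounded compact_continuous_image K(1))
  then obtain M where "\<And>w. w \<in> K \<Longrightarrow> norm (?rho w) \<le> M"
    unfolding bounded_iff by blast
  then show thesis
    by (intro that[of M]) (fastforce dest: abs_le_D1)
qed

lemma smooth_on_vf_apply:
  fixes V :: "'a::euclidean_space \<Rightarrow> 'a"
  assumes V: "\<And>b. b \<in> Basis \<Longrightarrow> smooth_on S (\<lambda>x. V x \<bullet> b)" and g: "smooth_on S g"
  shows "smooth_on S (vf_apply V g)"
proof (rule smooth_on_cong)
  show "smooth_on S (\<lambda>x. \<Sum>b\<in>Basis. (V x \<bullet> b) * frechet_derivative g (at x) b)"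
    by (intro smooth_on_sum smooth_on_mult V smooth_on_partial[OF g] smooth_on_open[OF g])
  show "vf_apply V g x = (\<Sum>b\<in>Basis. (V x \<bullet> b) * frechet_derivative g (at x) b)" if "x \<in> S" for x
    unfolding vf_apply_def
    by (subst frechet_derivative_Basis_expansion[OF smooth_on_differentiable[OF g that]]) simp
qed

lemma smooth_on_vf_word:
  fixes V :: "nat \<Rightarrow> 'a::euclidean_space \<Rightarrow> 'a"
  assumes V: "\<And>i b. i < d \<Longrightarrow> b \<in> Basis \<Longrightarrow> smooth_on S (\<lambda>x. V i x \<bullet> b)" and g: "smooth_on S g"
  shows "set I \<subseteq> {..<d} \<Longrightarrow> smooth_on S (vf_word V I g)"
proof (induction I)
  case (Cons i I)
  then show ?case using smooth_on_vf_apply[OF V] by simp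
qed (simp add: g)

lemma vf_word_pullback:
  fixes Vt :: "nat \<Rightarrow> 'a::euclidean_space \<Rightarrow> 'a" and V :: "nat \<Rightarrow> 'b::euclidean_space \<Rightarrow> 'b"
  assumes P: "bounded_linear P" and S: "open S" and PS: "P ` S \<subseteq> Q"
    and VP: "\<And>i z. i < d \<Longrightarrow> z \<in> S \<Longrightarrow> P (Vt i z) = V i (P z)"
    and V: "\<And>i b. i < d \<Longrightarrow> b \<in> Basis \<Longrightarrow> smooth_on Q (\<lambda>x. V i x \<bullet> b)" and g: "smooth_on Q g"
    and I: "set I \<subseteq> {..<d}" and z: "z \<in> S"
  shows "vf_word Vt I (\<lambda>z. g (P z)) z = vf_word V I g (P z)"
  using I z
proof (induction I arbitrary: z)
  case Nil
  then show ?case by simp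
next
  case (Cons i I)
  let ?h = "vf_word V I g"
  have i: "i < d" and I: "set I \<subseteq> {..<d}" using Cons.prems by auto
  have Pz: "P z \<in> Q" using PS Cons.prems by auto
  have der: "((\<lambda>z. ?h (P z)) has_derivative (\<lambda>v. frechet_derivative ?h (at (P z)) (P v))) (at z)"
    using diff_chain_at[OF bounded_linear.has_derivative[OF P has_derivative_ident]
        frechet_derivative_works[THEN iffD1, OF smooth_on_differentiable[OF smooth_on_vf_word[OF V g I] Pz]]]
    by (simp add: o_def)
  have "frechet_derivative (\<lambda>z. ?h (P z)) (at z) = frechet_derivative (vf_word Vt I (\<lambda>z. g (P z))) (at z)"
    using der Cons.IH[OF I, symmetric]
    by (intro frechet_derivative_transform_within_open[OF _ S \<open>z \<in> S\<close>]) (auto simp: differentiable_def)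
  then have "vf_word Vt (i # I) (\<lambda>z. g (P z)) z = frechet_derivative (\<lambda>z. ?h (P z)) (at z) (Vt i z)"
    by (simp add: vf_apply_def)
  also have "\<dots> = frechet_derivative ?h (at (P z)) (V i (P z))"
    using frechet_derivative_at[OF der, symmetric] VP[OF i \<open>z \<in> S\<close>] by simp
  finally show ?case by (simp add: vf_apply_def)
qed

section \<open>Integration over cylinders\<close>

lemma bounded_linear_proj_x: "bounded_linear proj_x"
  unfolding proj_x_def
  by (rule linear_conv_bounded_linear[THEN iffD1], rule linearI) (simp_all add: vec_eq_iff)

lemma bounded_linear_proj_x': "bounded_linear proj_x'"
  unfolding proj_x'_def
  by (rule linear_conv_bounded_linear[THEN iffD1], rule linearI) (simp_all add: vec_eq_iff)

lemma norm_power2_proj_x_proj_x':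
  fixes z :: "real^('p::finite + 'k::finite)"
  shows "(norm z)\<^sup>2 = (norm (proj_x z))\<^sup>2 + (norm (proj_x' z))\<^sup>2"
  unfolding power2_norm_eq_inner inner_vec_def
  by (simp add: UNIV_Plus_UNIV[symmetric] sum.Plus proj_x_def proj_x'_def del: UNIV_Plus_UNIV)

lemma bounded_cylinder:
  assumes "bounded U" "bounded U'"
  shows "bounded {z :: real^('p::finite + 'k::finite). proj_x z \<in> U \<and> proj_x' z \<in> U'}"
proof -
  obtain B1 B2 where B1: "\<And>x. x \<in> U \<Longrightarrow> norm x \<le> B1" and B2: "\<And>x. x \<in> U' \<Longrightarrow> norm x \<le> B2"
    using assms unfolding bounded_iff by metis
  have "norm z \<le> B1 + B2" if "proj_x z \<in> U" "proj_x' z \<in> U'" for z :: "real^('p + 'k)"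
  proof (rule power2_le_imp_le)
    have "(norm z)\<^sup>2 \<le> (norm (proj_x z) + norm (proj_x' z))\<^sup>2"
      by (simp add: norm_power2_proj_x_proj_x' power2_sum)
    also have "\<dots> \<le> (B1 + B2)\<^sup>2"
      using B1 B2 that by (intro power_mono add_mono) auto
    finally show "(norm z)\<^sup>2 \<le> (B1 + B2)\<^sup>2" .
    show "0 \<le> B1 + B2" using B1 B2 that norm_ge_zero by (meson add_nonneg_nonneg order_trans)
  qed
  then show ?thesis unfolding bounded_iff by blast
qed

lemma open_cylinder:
  assumes "open U" "open U'"
  shows "open {z :: real^('p::finite + 'k::finite). proj_x z \<in> U \<and> proj_x' z \<in> U'}"
proof -
  have "{z. proj_x z \<in> U \<and> proj_x' z \<in> U'} = proj_x -` U \<inter> proj_x' -` U'" by auto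
  then show ?thesis
    by (simp only:) (intro open_Int open_vimage assms linear_continuous_on bounded_linear_proj_x
        bounded_linear_proj_x')
qed

lemma prod_Basis_cart: "(\<Prod>b\<in>(Basis::(real^'n::finite) set). f b) = (\<Prod>i\<in>UNIV. f (axis i 1))"
proof -
  have B: "(Basis::(real^'n) set) = range (\<lambda>i. axis i 1)" by (auto simp: Basis_vec_def)
  have inj: "inj (\<lambda>i::'n. axis i (1::real))" by (auto intro!: injI simp: axis_eq_axis)
  show ?thesis unfolding B by (simp add: prod.reindex[OF inj])
qed

lemma prod_Basis_prod_eq:
  "(\<Prod>b\<in>(Basis::('a::euclidean_space \<times> 'b::euclidean_space) set). f b) =
     (\<Prod>i\<in>Basis. f (i, 0)) * (\<Prod>i\<in>Basis. f (0, i))"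
proof -
  have i1: "inj_on (\<lambda>u. (u::'a, 0::'b)) Basis" and i2: "inj_on (\<lambda>u. (0::'a, u::'b)) Basis"
    by (auto intro!: inj_onI)
  have disj: "(\<lambda>u. (u::'a, 0::'b)) ` Basis \<inter> (\<lambda>u. (0::'a, u::'b)) ` Basis = {}"
    using nonzero_Basis by fastforce
  show ?thesis
    unfolding Basis_prod_def
    by (simp only: prod.union_disjoint[OF finite_imageI[OF finite_Basis] finite_imageI[OF finite_Basis] disj]
        prod.reindex[OF i1] prod.reindex[OF i2] o_def)
qed

lemma vimage_proj_x_proj_x'_box:
  fixes la ua :: "real^'p::finite" and lb ub :: "real^'k::finite"
  shows "(\<lambda>z::real^('p + 'k). (proj_x z, proj_x' z)) -` box (la, lb) (ua, ub) =
           box (\<chi> r. case r of Inl i \<Rightarrow> la $ i | Inr j \<Rightarrow> lb $ j) (\<chi> r. case r of Inl i \<Rightarrow> ua $ i | Inr j \<Rightarrow> ub $ j)"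
proof -
  have all_Plus: "(\<forall>r. P r) \<longleftrightarrow> (\<forall>i. P (Inl i)) \<and> (\<forall>j. P (Inr j))" for P :: "'p + 'k \<Rightarrow> bool"
    by (metis sum.exhaust)
  have "box (la, lb) (ua, ub) = box la ua \<times> box lb ub"
    by (auto simp: Basis_prod_def ball_Un box_def)
  then show ?thesis
    by (auto simp: mem_box_cart proj_x_def proj_x'_def all_Plus)
qed

lemma distr_lborel_proj_x_proj_x':
  "distr lborel borel (\<lambda>z::real^('p::finite + 'k::finite). (proj_x z, proj_x' z)) =
     (lborel :: ((real^'p) \<times> (real^'k)) measure)"
proof (rule lborel_eqI[symmetric])
  fix l u :: "(real^'p) \<times> (real^'k)"
  assume le: "\<And>b. b \<in> Basis \<Longrightarrow> l \<bullet> b \<le> u \<bullet> b"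
  obtain la lb where l: "l = (la, lb)" by fastforce
  obtain ua ub where u: "u = (ua, ub)" by fastforce
  have le1: "la $ i \<le> ua $ i" and le2: "lb $ j \<le> ub $ j" for i j
    using le[of "(axis i 1, 0)"] le[of "(0, axis j 1)"]
    by (auto simp: l u cart_eq_inner_axis Basis_prod_def Basis_vec_def)
  define L :: "real^('p + 'k)" where "L = (\<chi> r. case r of Inl i \<Rightarrow> la $ i | Inr j \<Rightarrow> lb $ j)"
  define R :: "real^('p + 'k)" where "R = (\<chi> r. case r of Inl i \<Rightarrow> ua $ i | Inr j \<Rightarrow> ub $ j)"
  have "emeasure (distr lborel borel (\<lambda>z. (proj_x z, proj_x' z))) (box l u) = emeasure lborel (box L R)"
    by (subst emeasure_distr)
       (auto simp: l u L_def R_def vimage_proj_x_proj_x'_box intro!: borel_measurable_continuous_onI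
         continuous_intros linear_continuous_on bounded_linear_Pair bounded_linear_proj_x
         bounded_linear_proj_x')
  also have "\<dots> = ennreal (\<Prod>b\<in>Basis. (R - L) \<bullet> b)"
    by (rule emeasure_lborel_box)
       (auto simp: Basis_vec_def L_def R_def cart_eq_inner_axis[symmetric] le1 le2 split: sum.split)
  also have "(\<Prod>b\<in>Basis. (R - L) \<bullet> b) = (\<Prod>r\<in>UNIV. R $ r - L $ r)"
    by (simp add: prod_Basis_cart cart_eq_inner_axis[symmetric])
  also have "\<dots> = (\<Prod>i\<in>UNIV. ua $ i - la $ i) * (\<Prod>j\<in>UNIV. ub $ j - lb $ j)"
    by (simp add: UNIV_Plus_UNIV[symmetric] prod.Plus L_def R_def o_def del: UNIV_Plus_UNIV)
  also have "\<dots> = (\<Prod>b\<in>Basis. (u - l) \<bullet> b)"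
    by (simp add: prod_Basis_prod_eq prod_Basis_cart l u cart_eq_inner_axis[symmetric])
  finally show "emeasure (distr lborel borel (\<lambda>z. (proj_x z, proj_x' z))) (box l u) =
      ennreal (\<Prod>b\<in>Basis. (u - l) \<bullet> b)" .
qed simp

lemma nn_integral_cylinder:
  fixes F :: "real^'p::finite \<Rightarrow> ennreal" and A :: "(real^'k::finite) set"
  assumes F: "F \<in> borel_measurable borel" and A: "A \<in> sets borel"
  shows "(\<integral>\<^sup>+z. F (proj_x z) * indicator A (proj_x' z) \<partial>(lborel :: (real^('p + 'k)) measure))
          = (\<integral>\<^sup>+x. F x \<partial>lborel) * emeasure lborel A"
proof -
  let ?G = "\<lambda>w::(real^'p) \<times> (real^'k). F (fst w) * indicator A (snd w)"
  have "(\<lambda>w::(real^'p) \<times> (real^'k). F (fst w)) \<in> borel_measurable borel"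
    by (rule measurable_compose[OF borel_measurable_continuous_onI[OF continuous_on_fst[OF continuous_on_id]] F])
  moreover have "(\<lambda>w::(real^'p) \<times> (real^'k). indicator A (snd w) :: ennreal) \<in> borel_measurable borel"
    by (rule measurable_compose[OF borel_measurable_continuous_onI[OF continuous_on_snd[OF continuous_on_id]]])
       (use A in simp)
  ultimately have G: "?G \<in> borel_measurable borel"
    by measurable
  have "(\<integral>\<^sup>+z. F (proj_x z) * indicator A (proj_x' z) \<partial>lborel)
      = integral\<^sup>N (distr lborel borel (\<lambda>z. (proj_x z, proj_x' z))) ?G"
    by (subst nn_integral_distr)
       (auto intro!: borel_measurable_continuous_onI continuous_intros linear_continuous_on
         bounded_linear_Pair bounded_linear_proj_x bounded_linear_proj_x' G)
  also have "\<dots> = (\<integral>\<^sup>+x. \<integral>\<^sup>+y. F x * indicator A y \<partial>lborel \<partial>lborel)"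
    using lborel.nn_integral_fst[of ?G] G
    by (simp add: distr_lborel_proj_x_proj_x' lborel_prod)
  also have "\<dots> = (\<integral>\<^sup>+x. F x \<partial>lborel) * emeasure lborel A"
    using A F by (simp add: nn_integral_cmult_indicator nn_integral_multc)
  finally show ?thesis .
qed

lemma set_integral_cylinder:
  fixes F :: "real^'p::finite \<Rightarrow> real"
  assumes Ut: "Ut = {z :: real^('p + 'k::finite). proj_x z \<in> U \<and> proj_x' z \<in> U'}"
    and U': "U' \<in> sets borel" "emeasure lborel U' < \<infinity>"
    and F: "set_integrable lborel U F" "\<And>x. x \<in> U \<Longrightarrow> 0 \<le> F x"
  shows "set_integrable lborel Ut (\<lambda>z. F (proj_x z))"
    and "(LINT z:Ut|lborel. F (proj_x z)) = measure lborel U' * (LINT x:U|lborel. F x)"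
proof -
  define F0 where "F0 = (\<lambda>x. indicator U x * F x)"
  define q where "q = (\<lambda>z. F0 (proj_x z) * indicator U' (proj_x' z))"
  have F0: "integrable lborel F0" "\<And>x. 0 \<le> F0 x"
    using F unfolding set_integrable_def F0_def by (auto simp: indicator_def)
  have F0_borel: "F0 \<in> borel_measurable borel"
    using borel_measurable_integrable[OF F0(1)] by simp
  have q_eq: "q = (\<lambda>z. indicator Ut z *\<^sub>R F (proj_x z))"
    by (auto simp: q_def F0_def Ut indicator_def)
  have q_borel: "q \<in> borel_measurable borel"
  proof -
    have "proj_x \<in> borel_measurable borel" "proj_x' \<in> borel_measurable borel"
      by (intro borel_measurable_continuous_onI linear_continuous_on bounded_linear_proj_x
          bounded_linear_proj_x')+
    then show ?thesis unfolding q_def using F0_borel U'(1) by measurable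
  qed
  have "ennreal (q z) = ennreal (F0 (proj_x z)) * indicator U' (proj_x' z)" for z
    by (cases "proj_x' z \<in> U'") (simp_all add: q_def)
  then have "(\<integral>\<^sup>+z. ennreal (q z) \<partial>lborel) = (\<integral>\<^sup>+x. ennreal (F0 x) \<partial>lborel) * emeasure lborel U'"
    using nn_integral_cylinder[of "\<lambda>x. ennreal (F0 x)" U'] F0_borel U'(1) by simp
  also have "\<dots> = ennreal (integral\<^sup>L lborel F0 * measure lborel U')"
    using F0 U'(2) by (simp add: nn_integral_eq_integral emeasure_eq_ennreal_measure ennreal_mult'
        integral_nonneg_AE)
  finally have nn_q: "(\<integral>\<^sup>+z. ennreal (q z) \<partial>lborel) = ennreal (integral\<^sup>L lborel F0 * measure lborel U')" .
  have q_nonneg: "0 \<le> q z" for z by (simp add: q_def F0(2))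
  have "integrable lborel q"
    using q_borel nn_q q_nonneg by (intro integrableI_nonneg) auto
  then show "set_integrable lborel Ut (\<lambda>z. F (proj_x z))"
    by (simp add: set_integrable_def q_eq)
  have "integral\<^sup>L lborel q = integral\<^sup>L lborel F0 * measure lborel U'"
    using integral_eq_nn_integral[of q lborel] q_borel nn_q q_nonneg F0
    by (simp add: integral_nonneg_AE measure_nonneg)
  then show "(LINT z:Ut|lborel. F (proj_x z)) = measure lborel U' * (LINT x:U|lborel. F x)"
    by (simp add: set_lebesgue_integral_def q_eq F0_def mult.commute)
qed

lemma set_integral_mult_bounded:
  fixes g rho :: "'a \<Rightarrow> real"
  assumes g: "set_integrable M A g" "\<And>x. x \<in> A \<Longrightarrow> 0 \<le> g x"
    and rho: "set_borel_measurable M A rho" "\<And>x. x \<in> A \<Longrightarrow> 0 \<le> rho x \<and> rho x \<le> c"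
  shows "set_integrable M A (\<lambda>x. g x * rho x)"
    and "(LINT x:A|M. g x * rho x) \<le> c * (LINT x:A|M. g x)"
proof -
  define G where "G = (\<lambda>x. indicator A x * g x)"
  define p where "p = (\<lambda>x. indicator A x * (g x * rho x))"
  have G: "integrable M G" using g(1) by (simp add: set_integrable_def G_def)
  have p_G: "p = (\<lambda>x. (indicator A x * rho x) * G x)"
    by (auto simp: p_def G_def indicator_def)
  have p_borel: "p \<in> borel_measurable M"
    unfolding p_G using rho(1) borel_measurable_integrable[OF G] by (simp add: set_borel_measurable_def)
  have p_le: "0 \<le> p x \<and> p x \<le> c * G x" for x
  proof (cases "x \<in> A")
    case True
    then show ?thesis using rho(2)[OF True] g(2)[OF True] by (simp add: p_def G_def mult.commute[of c] mult_left_mono)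
  qed (simp add: p_def G_def)
  have p: "integrable M p"
    by (rule Bochner_Integration.integrable_bound[OF integrable_mult_right[OF G, of c] p_borel])
       (use p_le in \<open>auto intro: order_trans[OF _ abs_ge_self]\<close>)
  then show "set_integrable M A (\<lambda>x. g x * rho x)"
    by (simp add: set_integrable_def p_def)
  have "integral\<^sup>L M p \<le> integral\<^sup>L M (\<lambda>x. c * G x)"
    using p G p_le by (intro integral_mono) auto
  then show "(LINT x:A|M. g x * rho x) \<le> c * (LINT x:A|M. g x)"
    by (simp add: set_lebesgue_integral_def p_def G_def)
qed

section \<open>The extension operator\<close>

lemma ext_op_S2_bound:
  fixes V :: "nat \<Rightarrow> real^'p::finite \<Rightarrow> real^'p"
    and Vt :: "nat \<Rightarrow> real^('p + 'k::finite) \<Rightarrow> real^('p + 'k)"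
  assumes Ut: "Ut = {z. proj_x z \<in> U \<and> proj_x' z \<in> U'}"
    and U: "open U" and U': "open U'" "bounded U'"
    and f: "smooth_on Q f" and UQ: "U \<subseteq> Q"
    and V: "\<And>i b. i < d \<Longrightarrow> b \<in> Basis \<Longrightarrow> smooth_on Q (\<lambda>x. V i x \<bullet> b)"
    and Vt: "\<And>i z. i < d \<Longrightarrow> z \<in> Ut \<Longrightarrow> proj_x (Vt i z) = V i (proj_x z)"
    and rho: "continuous_on Ut rho" "\<And>z. z \<in> Ut \<Longrightarrow> 0 \<le> rho z \<and> rho z \<le> M"
    and f_S2: "S2_mem V d k U (\<lambda>_. 1) f"
  shows "S2_mem Vt d k Ut rho (ext_op f) \<and>
         S2_norm Vt d k Ut rho (ext_op f) \<le> sqrt (M * measure lborel U') * S2_norm V d k U (\<lambda>_. 1) f"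
proof -
  have Ut_open: "open Ut" unfolding Ut by (rule open_cylinder[OF U U'(1)])
  have rho_borel: "set_borel_measurable lborel Ut rho"
    using borel_measurable_continuous_on_indicator[OF _ rho(1)] Ut_open
    by (simp add: set_borel_measurable_def)
  have U'_finite: "emeasure lborel U' < \<infinity>"
    using emeasure_bounded_finite[OF U'(2)] by (simp add: less_top)
  have word_bound: "set_integrable lborel Ut (\<lambda>z. (vf_word Vt I (ext_op f) z)\<^sup>2 * rho z) \<and>
      (LINT z:Ut|lborel. (vf_word Vt I (ext_op f) z)\<^sup>2 * rho z)
        \<le> M * measure lborel U' * (LINT x:U|lborel. (vf_word V I f x)\<^sup>2)"
    if "I \<in> words_upto d k" for I
  proof -
    have I: "set I \<subseteq> {..<d}" using that by (simp add: words_upto_def)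
    have "vf_word Vt I (ext_op f) z = vf_word V I f (proj_x z)" if "z \<in> Ut" for z
      using vf_word_pullback[where Vt=Vt and V=V and P=proj_x and g=f, OF bounded_linear_proj_x Ut_open
          _ Vt V f I that] UQ
      by (auto simp: Ut ext_op_def[abs_def])
    then have eq: "(vf_word Vt I (ext_op f) z)\<^sup>2 * rho z = (vf_word V I f (proj_x z))\<^sup>2 * rho z"
      if "z \<in> Ut" for z
      using that by simp
    have F: "set_integrable lborel U (\<lambda>x. (vf_word V I f x)\<^sup>2)"
      using f_S2 that by (simp add: S2_mem_def)
    have F_Ut: "set_integrable lborel Ut (\<lambda>z. (vf_word V I f (proj_x z))\<^sup>2)"
      and int_F_Ut: "(LINT z:Ut|lborel. (vf_word V I f (proj_x z))\<^sup>2)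
          = measure lborel U' * (LINT x:U|lborel. (vf_word V I f x)\<^sup>2)"
      using set_integral_cylinder[OF Ut U'(1)[THEN borel_open] U'_finite F] by auto
    note cyl = set_integral_mult_bounded[OF F_Ut _ rho_borel rho(2), unfolded int_F_Ut]
    have "(LINT z:Ut|lborel. (vf_word Vt I (ext_op f) z)\<^sup>2 * rho z)
        = (LINT z:Ut|lborel. (vf_word V I f (proj_x z))\<^sup>2 * rho z)"
      using Ut_open eq by (intro set_lebesgue_integral_cong) auto
    moreover have "set_integrable lborel Ut (\<lambda>z. (vf_word Vt I (ext_op f) z)\<^sup>2 * rho z)
        = set_integrable lborel Ut (\<lambda>z. (vf_word V I f (proj_x z))\<^sup>2 * rho z)"
      using eq by (intro set_integrable_cong) auto
    ultimately show ?thesis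
      using cyl by (simp add: mult.assoc)
  qed
  have "(\<Sum>I\<in>words_upto d k. sqrt (LINT z:Ut|lborel. (vf_word Vt I (ext_op f) z)\<^sup>2 * rho z))
      \<le> (\<Sum>I\<in>words_upto d k. sqrt (M * measure lborel U') * sqrt (LINT x:U|lborel. (vf_word V I f x)\<^sup>2 * 1))"
    using word_bound by (intro sum_mono) (simp add: real_sqrt_mult[symmetric])
  then show ?thesis
    using word_bound by (simp add: S2_mem_def S2_norm_def sum_distrib_left)
qed

lemma smooth_on_lift_field:
  fixes X :: "real^'p::finite \<Rightarrow> real^'q::finite \<Rightarrow> real^'p"
    and u :: "real^('p + 'k::finite) \<Rightarrow> real^'q \<Rightarrow> real^'k"
  assumes X: "smooth_on W1 (\<lambda>(x, y). X x y)" and u: "smooth_on W2 (\<lambda>(z, y). u z y)"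
    and b: "b \<in> Basis"
  shows "smooth_on ({w. (proj_x (fst w), snd w) \<in> W1} \<inter> W2) (\<lambda>w. lift_field X u (snd w) (fst w) \<bullet> b)"
proof -
  let ?L = "\<lambda>w :: (real^('p + 'k)) \<times> (real^'q). (proj_x (fst w), snd w)"
  have L: "bounded_linear ?L"
    by (intro bounded_linear_Pair bounded_linear_compose[OF bounded_linear_proj_x] bounded_linear_fst
        bounded_linear_snd)
  have X_comp: "smooth_on {w. ?L w + 0 \<in> W1} (\<lambda>w. (case ?L w + 0 of (x, y) \<Rightarrow> X x y) $ l)" for l
    by (intro smooth_on_compose_affine L smooth_on_bounded_linear[OF bounded_linear_vec_nth X])
  have W: "open ({w. ?L w \<in> W1} \<inter> W2)"
    using smooth_on_open[OF X_comp] smooth_on_open[OF u] by auto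
  obtain r where r: "b = axis r 1" using b by (auto simp: Basis_vec_def)
  show ?thesis
  proof (cases r)
    case (Inl l)
    from smooth_on_subset[OF X_comp W] show ?thesis
      by (rule smooth_on_cong) (auto simp: r Inl cart_eq_inner_axis[symmetric] lift_field_def)
  next
    case (Inr j)
    from smooth_on_subset[OF smooth_on_bounded_linear[OF bounded_linear_vec_nth u] W]
    show ?thesis
      by (rule smooth_on_cong) (auto simp: r Inr cart_eq_inner_axis[symmetric] lift_field_def)
  qed
qed

lemma tuples_upto_imp_pos: "J \<in> tuples_upto d m \<Longrightarrow> 0 < d"
  by (cases J) (auto simp: tuples_upto_def)

lemma lift_field_frame_density:
  fixes X :: "nat \<Rightarrow> real^'p::finite \<Rightarrow> real^'q::finite \<Rightarrow> real^'p"
    and u :: "nat \<Rightarrow> real^('p + 'k::finite) \<Rightarrow> real^'q \<Rightarrow> real^'k"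
  assumes Ut: "Ut = {z. proj_x z \<in> U \<and> proj_x' z \<in> U'}"
    and bounded: "bounded U" "bounded U'" "bounded T"
    and W1: "open W1" "closure U \<times> closure T \<subseteq> W1"
    and X: "\<And>i. i < d \<Longrightarrow> smooth_on W1 (\<lambda>(x, y). X i x y)"
    and W2: "open W2" "closure Ut \<times> closure T \<subseteq> W2"
    and u: "\<And>i. i < d \<Longrightarrow> smooth_on W2 (\<lambda>(z, y). u i z y)"
    and Js: "\<And>c. Js c \<in> tuples_upto d m"
    and det: "\<And>z y. z \<in> closure Ut \<Longrightarrow> y \<in> closure T \<Longrightarrow>
                det (frame_matrix (\<lambda>i. lift_field (X i) (u i) y) Js z) \<noteq> 0"
  obtains M where
    "\<And>y. y \<in> closure T \<Longrightarrow> continuous_on Ut (frame_density (\<lambda>i. lift_field (X i) (u i) y) Js)"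
    "\<And>z y. z \<in> Ut \<Longrightarrow> y \<in> closure T \<Longrightarrow> frame_density (\<lambda>i. lift_field (X i) (u i) y) Js z \<le> M"
proof -
  define Y where "Y y i = lift_field (X i) (u i) y" for y i
  define W where "W = {w. (proj_x (fst w), snd w) \<in> W1} \<inter> W2"
  define K where "K = closure Ut \<times> closure T"
  have Y: "smooth_on W (\<lambda>w. Y (snd w) i (fst w) \<bullet> b)" if "i < d" "b \<in> Basis" for i b
    unfolding W_def Y_def by (rule smooth_on_lift_field[OF X[OF that(1)] u[OF that(1)] that(2)])
  have "continuous_on UNIV (\<lambda>w::(real^('p + 'k)) \<times> (real^'q). (proj_x (fst w), snd w))"
    by (intro continuous_intros linear_continuous_on bounded_linear_compose[OF bounded_linear_proj_x]
        bounded_linear_fst)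
  then have W_open: "open W"
    unfolding W_def using open_vimage[OF W1(1)] W2(1) by (auto simp: vimage_def)
  have K_compact: "compact K"
    unfolding K_def Ut compact_closure
    by (intro compact_Times compact_closure[THEN iffD2] bounded_cylinder bounded)
  have "proj_x ` Ut \<subseteq> closure U" using closure_subset by (auto simp: Ut)
  then have proj_closure: "proj_x ` closure Ut \<subseteq> closure U"
    by (intro image_closure_subset linear_continuous_on bounded_linear_proj_x closed_closure)
  have K_W: "K \<subseteq> W"
  proof
    fix w assume "w \<in> K"
    then obtain z t where w: "w = (z, t)" "z \<in> closure Ut" "t \<in> closure T"
      unfolding K_def by blast
    with proj_closure have "(proj_x z, t) \<in> W1" using W1(2) by blast
    with w W2(2) show "w \<in> W" unfolding W_def by auto
  qed
  have det_K: "det (frame_matrix (Y y) Js z) \<noteq> 0" if "(z, y) \<in> K" for z y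
    using det that unfolding K_def Y_def[abs_def] by blast
  obtain M where M: "\<And>z y. (z, y) \<in> K \<Longrightarrow> frame_density (Y y) Js z \<le> M"
    using frame_density_bounded[where Y=Y and Js=Js, OF W_open Y Js K_compact K_W det_K] by blast
  have Ut_K: "(z, y) \<in> K" if "z \<in> Ut" "y \<in> closure T" for z y
    unfolding K_def using that closure_subset[of Ut] by blast
  show thesis
  proof (rule that)
    fix y assume "y \<in> closure T"
    then have "(z, y) \<in> W \<and> det (frame_matrix (Y y) Js z) \<noteq> 0" if "z \<in> Ut" for z
      using K_W Ut_K det_K that by blast
    then show "continuous_on Ut (frame_density (\<lambda>i. lift_field (X i) (u i) y) Js)"
      using continuous_on_frame_density[where Y=Y and Js=Js, OF W_open Y Js] by (simp add: Y_def[abs_def])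
  next
    fix z y assume "z \<in> Ut" "y \<in> closure T"
    then show "frame_density (\<lambda>i. lift_field (X i) (u i) y) Js z \<le> M"
      using M Ut_K by (simp add: Y_def[abs_def])
  qed
qed

lemma smooth_on_slice_neighbourhood:
  fixes X :: "nat \<Rightarrow> 'a::euclidean_space \<Rightarrow> 'c::euclidean_space \<Rightarrow> 'a"
  assumes W1: "open W1" "closure U \<times> closure T \<subseteq> W1"
    and X: "\<And>i. i < d \<Longrightarrow> smooth_on W1 (\<lambda>(x, y). X i x y)"
    and V: "closure U \<subseteq> V" "smooth_on V f" and y: "y \<in> closure T"
  obtains Q where "U \<subseteq> Q" "smooth_on Q f" "\<And>i b. i < d \<Longrightarrow> smooth_on Q (\<lambda>x. X i x y \<bullet> b)"
proof
  let ?Q = "V \<inter> {x. (x, y) \<in> W1}"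
  have "continuous_on UNIV (\<lambda>x. (x, y))" by (intro continuous_intros)
  then have Q_open: "open ?Q"
    using open_vimage[OF W1(1)] smooth_on_open[OF V(2)] by (auto simp: vimage_def)
  show "U \<subseteq> ?Q" using V(1) W1(2) y closure_subset[of U] by blast
  show "smooth_on ?Q f" by (rule smooth_on_subset[OF V(2) Q_open]) simp
  show "smooth_on ?Q (\<lambda>x. X i x y \<bullet> b)" if "i < d" for i b
    using smooth_on_slice[OF smooth_on_bounded_linear[OF bounded_linear_inner_left X[OF that]], of y]
    by (intro smooth_on_subset[OF _ Q_open]) auto
qed

theorem proposition3p8:
  fixes U :: "(real^'p::finite) set" and U' :: "(real^'k::finite) set" and T :: "(real^'q::finite) set"
    and X :: "nat \<Rightarrow> real^'p \<Rightarrow> real^'q \<Rightarrow> real^'p"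
    and u :: "nat \<Rightarrow> real^('p + 'k) \<Rightarrow> real^'q \<Rightarrow> real^'k"
    and d m :: nat
    and Js :: "'p + 'k \<Rightarrow> nat list"
    and W1 :: "((real^'p) \<times> (real^'q)) set" and W2 :: "((real^('p + 'k)) \<times> (real^'q)) set"
  defines "Ut \<equiv> {z :: real^('p + 'k). proj_x z \<in> U \<and> proj_x' z \<in> U'}"
  defines "Xt \<equiv> (\<lambda>y i. lift_field (X i) (u i) y)"
  assumes U: "open U" "(0::real^'p) \<in> U" "bounded U"
    and U': "open U'" "(0::real^'k) \<in> U'" "bounded U'"
    and T: "open T" "(0::real^'q) \<in> T" "bounded T"
    and W1: "closure U \<times> closure T \<subseteq> W1"
    and X_smooth: "\<And>i. i < d \<Longrightarrow> smooth_on W1 (\<lambda>(x, y). X i x y)"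
    and W2: "closure Ut \<times> closure T \<subseteq> W2"
    and u_smooth: "\<And>i. i < d \<Longrightarrow> smooth_on W2 (\<lambda>(z, y). u i z y)"
    and free: "free_nilpotent_dim d m = int CARD('p + 'k)"
    and span_all: "\<And>z y. z \<in> closure Ut \<Longrightarrow> y \<in> closure T \<Longrightarrow>
                      span {commutator (Xt y) J z | J. J \<in> tuples_upto d m} = UNIV"
    and Js_tuples: "\<And>c. Js c \<in> tuples_upto d m"
    and Js_gen: "\<And>i. i < d \<Longrightarrow> [i] \<in> range Js"
    and Js_basis: "\<And>z y. z \<in> closure Ut \<Longrightarrow> y \<in> closure T \<Longrightarrow>
                      det (frame_matrix (Xt y) Js z) \<noteq> 0"
  shows "\<forall>k::nat. \<exists>C::real. \<forall>y\<in>T. \<forall>f::real^'p \<Rightarrow> real.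
           (\<exists>V. closure U \<subseteq> V \<and> smooth_on V f) \<and>
           S2_mem (\<lambda>i x. X i x y) d k U (\<lambda>_. 1) f \<longrightarrow>
             S2_mem (Xt y) d k Ut (frame_density (Xt y) Js) (ext_op f) \<and>
             S2_norm (Xt y) d k Ut (frame_density (Xt y) Js) (ext_op f)
               \<le> C * S2_norm (\<lambda>i x. X i x y) d k U (\<lambda>_. 1) f"
proof -
  have "0 < d" using tuples_upto_imp_pos[OF Js_tuples] .
  then have W_open: "open W1" "open W2"
    using smooth_on_open[OF X_smooth] smooth_on_open[OF u_smooth] by blast+
  obtain M where dens_cont: "\<And>y. y \<in> closure T \<Longrightarrow> continuous_on Ut (frame_density (Xt y) Js)"
    and dens_le: "\<And>z y. z \<in> Ut \<Longrightarrow> y \<in> closure T \<Longrightarrow> frame_density (Xt y) Js z \<le> M"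
    using lift_field_frame_density[where X=X and u=u and Js=Js, OF Ut_def[THEN meta_eq_to_obj_eq] U(3) U'(3) T(3) W_open(1) W1 X_smooth
        W_open(2) W2 u_smooth Js_tuples] Js_basis
    unfolding Xt_def by blast
  have Xt_proj: "proj_x (Xt y i z) = X i (proj_x z) y" for y i z
    by (simp add: Xt_def lift_field_def proj_x_def vec_eq_iff)
  show ?thesis
  proof (intro allI exI[of _ "sqrt (M * measure lborel U')"] ballI impI, elim conjE exE)
    fix k y f V assume y: "y \<in> T" and V: "closure U \<subseteq> V" "smooth_on V f"
      and f_S2: "S2_mem (\<lambda>i x. X i x y) d k U (\<lambda>_. 1) f"
    have y_cl: "y \<in> closure T" using y closure_subset by blast
    obtain Q where "U \<subseteq> Q" "smooth_on Q f" "\<And>i b. i < d \<Longrightarrow> smooth_on Q (\<lambda>x. X i x y \<bullet> b)"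
      using smooth_on_slice_neighbourhood[where X=X, OF W_open(1) W1 X_smooth V y_cl] by blast
    with dens_cont[OF y_cl] dens_le[OF _ y_cl] Xt_proj f_S2 show
      "S2_mem (Xt y) d k Ut (frame_density (Xt y) Js) (ext_op f) \<and>
       S2_norm (Xt y) d k Ut (frame_density (Xt y) Js) (ext_op f)
         \<le> sqrt (M * measure lborel U') * S2_norm (\<lambda>i x. X i x y) d k U (\<lambda>_. 1) f"
      by (intro ext_op_S2_bound[OF Ut_def[THEN meta_eq_to_obj_eq] U(1) U'(1,3)])
        (auto simp: frame_density_def)
  qed
qed

end
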